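(* For every $d\ge 1$, the class of $d$-CBU graphs is strictly contained in the class of $(d+1)$-CBU graphs.
   Context: Let $e_1,\ldots,e_d$ be the standard basis of $\mathbb{R}^d$. For $d\ge 1$, a graph belongs to $d$-CBU if one can assign to each vertex an axis-parallel box (product of $d$ closed intervals of positive length) in $\mathbb{R}^d$ such that the boxes have pairwise disjoint interiors, two distinct vertices are adjacent iff their boxes intersect, and any two intersecting boxes intersect in a $(d-1)$-dimensional box orthogonal to $e_1$. *)

theory Defs
  imports Main "HOL-Library.Set_Idioms" Complex_Main
begin

text \<open>Points of R^d are represented as functions nat => real whose coordinates
  with index >= d vanish; coordinate 0 corresponds to the basis vector e_1.\<close>

definition cbox_d :: "nat \<Rightarrow> (nat \<Rightarrow> real) \<Rightarrow> (nat \<Rightarrow> real) \<Rightarrow> (nat \<Rightarrow> real) set" where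
  "cbox_d d a b = {x. (\<forall>i<d. a i \<le> x i \<and> x i \<le> b i) \<and> (\<forall>i\<ge>d. x i = 0)}"

definition obox_d :: "nat \<Rightarrow> (nat \<Rightarrow> real) \<Rightarrow> (nat \<Rightarrow> real) \<Rightarrow> (nat \<Rightarrow> real) set" where
  "obox_d d a b = {x. (\<forall>i<d. a i < x i \<and> x i < b i) \<and> (\<forall>i\<ge>d. x i = 0)}"

definition orth_facet_d :: "nat \<Rightarrow> (nat \<Rightarrow> real) set \<Rightarrow> bool" where
  "orth_facet_d d S \<longleftrightarrow> (\<exists>c a b. (\<forall>i\<in>{1..<d}. a i < b i) \<and>
     S = {x. x 0 = c \<and> (\<forall>i\<in>{1..<d}. a i \<le> x i \<and> x i \<le> b i) \<and> (\<forall>i\<ge>d. x i = 0)})"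

definition simple_graph :: "nat set \<Rightarrow> (nat \<Rightarrow> nat \<Rightarrow> bool) \<Rightarrow> bool" where
  "simple_graph V E \<longleftrightarrow> finite V \<and> (\<forall>u v. E u v \<longrightarrow> u \<in> V \<and> v \<in> V) \<and>
     (\<forall>u v. E u v \<longrightarrow> E v u) \<and> (\<forall>v. \<not> E v v)"

definition CBU :: "nat \<Rightarrow> nat set \<Rightarrow> (nat \<Rightarrow> nat \<Rightarrow> bool) \<Rightarrow> bool" where
  "CBU d V E \<longleftrightarrow> simple_graph V E \<and>
    (\<exists>a b :: nat \<Rightarrow> nat \<Rightarrow> real.
       (\<forall>v\<in>V. \<forall>i<d. a v i < b v i) \<and>
       (\<forall>u\<in>V. \<forall>v\<in>V. u \<noteq> v \<longrightarrow> obox_d d (a u) (b u) \<inter> obox_d d (a v) (b v) = {}) \<and>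
       (\<forall>u\<in>V. \<forall>v\<in>V. u \<noteq> v \<longrightarrow>
          (E u v \<longleftrightarrow> cbox_d d (a u) (b u) \<inter> cbox_d d (a v) (b v) \<noteq> {})) \<and>
       (\<forall>u\<in>V. \<forall>v\<in>V. u \<noteq> v \<longrightarrow> cbox_d d (a u) (b u) \<inter> cbox_d d (a v) (b v) \<noteq> {} \<longrightarrow>
          orth_facet_d d (cbox_d d (a u) (b u) \<inter> cbox_d d (a v) (b v))))"

end

theory Submission
  imports Defs
begin

text \<open>In a d-CBU representation adjacent boxes abut in coordinate 0 and overlap in every other
  coordinate, while non-adjacent boxes are strictly separated in some coordinate. Extending every
  box by the interval [0, 1] in a new coordinate therefore preserves the representation.

  For strictness take the crown graph, K_{n,n} minus the perfect matching {i, i + n}, with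
  n = 2d + 1. In dimension d each matched pair is separated in one of d coordinates and on one of
  two sides, so two pairs i, k make the same choice, which contradicts the overlap of the boxes of
  the edges {i, k + n} and {k, i + n} in that coordinate. In dimension d + 1, coordinate 0 makes
  all left boxes abut all right boxes except for the pair 2d, and each further coordinate p + 1
  separates the pair {2p, 2p + 1}.\<close>

definition proper_interval :: "real \<times> real \<Rightarrow> bool" where
  "proper_interval I \<longleftrightarrow> fst I < snd I"

definition intervals_overlap :: "real \<times> real \<Rightarrow> real \<times> real \<Rightarrow> bool" where
  "intervals_overlap I J \<longleftrightarrow> fst I < snd J \<and> fst J < snd I"

definition intervals_abut :: "real \<times> real \<Rightarrow> real \<times> real \<Rightarrow> bool" where
  "intervals_abut I J \<longleftrightarrow> snd I = fst J \<or> snd J = fst I"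

definition intervals_apart :: "real \<times> real \<Rightarrow> real \<times> real \<Rightarrow> bool" where
  "intervals_apart I J \<longleftrightarrow> snd I < fst J \<or> snd J < fst I"

definition boxes_touch :: "nat \<Rightarrow> (nat \<Rightarrow> real \<times> real) \<Rightarrow> (nat \<Rightarrow> real \<times> real) \<Rightarrow> bool" where
  "boxes_touch d X Y \<longleftrightarrow> intervals_abut (X 0) (Y 0) \<and> (\<forall>j\<in>{1..<d}. intervals_overlap (X j) (Y j))"

definition boxes_apart :: "nat \<Rightarrow> (nat \<Rightarrow> real \<times> real) \<Rightarrow> (nat \<Rightarrow> real \<times> real) \<Rightarrow> bool" where
  "boxes_apart d X Y \<longleftrightarrow> (\<exists>j<d. intervals_apart (X j) (Y j))"

lemma intervals_overlap_commute: "intervals_overlap I J \<longleftrightarrow> intervals_overlap J I"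
  by (auto simp: intervals_overlap_def)

lemma intervals_apart_commute: "intervals_apart I J \<longleftrightarrow> intervals_apart J I"
  by (auto simp: intervals_apart_def)

lemma boxes_touch_commute: "boxes_touch d X Y \<longleftrightarrow> boxes_touch d Y X"
  by (auto simp: boxes_touch_def intervals_abut_def intervals_overlap_commute)

lemma boxes_apart_commute: "boxes_apart d X Y \<longleftrightarrow> boxes_apart d Y X"
  by (auto simp: boxes_apart_def intervals_apart_commute)

lemma
  assumes "proper_interval I" "proper_interval J"
  shows intervals_overlap_iff_max_min: "intervals_overlap I J \<longleftrightarrow> max (fst I) (fst J) < min (snd I) (snd J)"
    and intervals_abut_iff_max_min: "intervals_abut I J \<longleftrightarrow> max (fst I) (fst J) = min (snd I) (snd J)"
    and intervals_apart_iff_max_min: "intervals_apart I J \<longleftrightarrow> min (snd I) (snd J) < max (fst I) (fst J)"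
  using assms
  by (auto simp: proper_interval_def intervals_overlap_def intervals_abut_def intervals_apart_def
      max_def min_def)

lemma boxes_touch_not_apart:
  assumes "boxes_touch d X Y" "j < d" "proper_interval (X j)" "proper_interval (Y j)"
  shows "\<not> intervals_apart (X j) (Y j)"
proof (cases "j = 0")
  case False
  then have "intervals_overlap (X j) (Y j)"
    using assms(1,2) by (simp add: boxes_touch_def)
  then show ?thesis
    by (auto simp: intervals_overlap_def intervals_apart_def)
qed (use assms in \<open>auto simp: boxes_touch_def intervals_abut_def intervals_apart_def proper_interval_def\<close>)

definition contact_representation ::
    "nat \<Rightarrow> nat set \<Rightarrow> (nat \<Rightarrow> nat \<Rightarrow> bool) \<Rightarrow> (nat \<Rightarrow> nat \<Rightarrow> real \<times> real) \<Rightarrow> bool" where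
  "contact_representation d V E box \<longleftrightarrow>
     (\<forall>v\<in>V. \<forall>j<d. proper_interval (box v j)) \<and>
     (\<forall>u\<in>V. \<forall>v\<in>V. u \<noteq> v \<longrightarrow>
        (if E u v then boxes_touch d (box u) (box v) else boxes_apart d (box u) (box v)))"

lemma
  assumes "contact_representation d V E box" "u \<in> V" "v \<in> V" "u \<noteq> v"
  shows contact_representation_adjacent: "E u v \<Longrightarrow> boxes_touch d (box u) (box v)"
    and contact_representation_nonadjacent: "\<not> E u v \<Longrightarrow> boxes_apart d (box u) (box v)"
  using assms by (auto simp: contact_representation_def)

lemma cbox_d_Int:
  "cbox_d d a b \<inter> cbox_d d a' b' = cbox_d d (\<lambda>i. max (a i) (a' i)) (\<lambda>i. min (b i) (b' i))"
  by (auto simp: cbox_d_def)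

lemma obox_d_Int:
  "obox_d d a b \<inter> obox_d d a' b' = obox_d d (\<lambda>i. max (a i) (a' i)) (\<lambda>i. min (b i) (b' i))"
  by (auto simp: obox_d_def)

lemma cbox_d_eq_empty: "cbox_d d a b = {} \<longleftrightarrow> (\<exists>i<d. b i < a i)"
proof
  assume "cbox_d d a b = {}"
  moreover have "(\<lambda>i. if i < d then a i else 0) \<in> cbox_d d a b" if "\<forall>i<d. a i \<le> b i"
    using that by (auto simp: cbox_d_def)
  ultimately show "\<exists>i<d. b i < a i"
    by (metis empty_iff not_less)
qed (force simp: cbox_d_def)

lemma obox_d_eq_empty: "obox_d d a b = {} \<longleftrightarrow> (\<exists>i<d. b i \<le> a i)"
proof
  assume "obox_d d a b = {}"
  moreover have "(\<lambda>i. if i < d then (a i + b i) / 2 else 0) \<in> obox_d d a b" if "\<forall>i<d. a i < b i"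
    using that by (auto simp: obox_d_def)
  ultimately show "\<exists>i<d. b i \<le> a i"
    by (metis empty_iff not_less)
qed (force simp: obox_d_def)

lemma orth_facet_d_cbox_d_iff:
  assumes "0 < d" and nonempty: "\<forall>i<d. a i \<le> b i"
  shows "orth_facet_d d (cbox_d d a b) \<longleftrightarrow> a 0 = b 0 \<and> (\<forall>i\<in>{1..<d}. a i < b i)"
proof
  assume "orth_facet_d d (cbox_d d a b)"
  then obtain c a' b' where ab': "\<forall>i\<in>{1..<d}. a' i < b' i" and
    S: "cbox_d d a b = {x. x 0 = c \<and> (\<forall>i\<in>{1..<d}. a' i \<le> x i \<and> x i \<le> b' i) \<and> (\<forall>i\<ge>d. x i = 0)}"
    unfolding orth_facet_d_def by blast
  define p where "p = (\<lambda>i. if i < d then a i else 0)"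
  have "p \<in> cbox_d d a b" "p(0 := b 0) \<in> cbox_d d a b"
    using nonempty \<open>0 < d\<close> by (auto simp: cbox_d_def p_def)
  then have "a 0 = c" "b 0 = c"
    unfolding S using \<open>0 < d\<close> by (auto simp: p_def)
  moreover have "a i < b i" if i: "i \<in> {1..<d}" for i
  proof -
    define q where "q y = (\<lambda>m. if m = 0 then c else if m < d then y m else 0)" for y :: "nat \<Rightarrow> real"
    have "q a' \<in> cbox_d d a b" "q b' \<in> cbox_d d a b"
      unfolding S using ab' \<open>0 < d\<close> by (auto simp: q_def less_imp_le)
    then have "a i \<le> a' i" "b' i \<le> b i"
      using i by (auto simp: cbox_d_def q_def)
    then show ?thesis
      using ab' i by force
  qed
  ultimately show "a 0 = b 0 \<and> (\<forall>i\<in>{1..<d}. a i < b i)"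
    by auto
next
  assume facet: "a 0 = b 0 \<and> (\<forall>i\<in>{1..<d}. a i < b i)"
  have "cbox_d d a b = {x. x 0 = a 0 \<and> (\<forall>i\<in>{1..<d}. a i \<le> x i \<and> x i \<le> b i) \<and> (\<forall>i\<ge>d. x i = 0)}"
  proof (intro set_eqI iffI)
    fix x assume x: "x \<in> {x. x 0 = a 0 \<and> (\<forall>i\<in>{1..<d}. a i \<le> x i \<and> x i \<le> b i) \<and> (\<forall>i\<ge>d. x i = 0)}"
    have "a i \<le> x i \<and> x i \<le> b i" if "i < d" for i
      using x facet that by (cases "i = 0") auto
    then show "x \<in> cbox_d d a b"
      using x by (auto simp: cbox_d_def)
  qed (use facet \<open>0 < d\<close> in \<open>auto simp: cbox_d_def\<close>)
  then show "orth_facet_d d (cbox_d d a b)"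
    unfolding orth_facet_d_def using facet by blast
qed

lemma CBU_pair_condition_iff:
  fixes X Y :: "nat \<Rightarrow> real \<times> real"
  assumes "0 < d" and proper: "\<forall>j<d. proper_interval (X j)" "\<forall>j<d. proper_interval (Y j)"
  defines "C \<equiv> cbox_d d (\<lambda>j. fst (X j)) (\<lambda>j. snd (X j)) \<inter> cbox_d d (\<lambda>j. fst (Y j)) (\<lambda>j. snd (Y j))"
    and "U \<equiv> obox_d d (\<lambda>j. fst (X j)) (\<lambda>j. snd (X j)) \<inter> obox_d d (\<lambda>j. fst (Y j)) (\<lambda>j. snd (Y j))"
  shows "(U = {} \<and> (e \<longleftrightarrow> C \<noteq> {}) \<and> (C \<noteq> {} \<longrightarrow> orth_facet_d d C)) \<longleftrightarrow>
    (if e then boxes_touch d X Y else boxes_apart d X Y)"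
proof -
  have C_eq_empty: "C = {} \<longleftrightarrow> boxes_apart d X Y"
    using proper by (auto simp: C_def cbox_d_Int cbox_d_eq_empty boxes_apart_def intervals_apart_iff_max_min)
  have facet: "orth_facet_d d C \<longleftrightarrow> boxes_touch d X Y" if "C \<noteq> {}"
  proof -
    have "\<forall>j<d. max (fst (X j)) (fst (Y j)) \<le> min (snd (X j)) (snd (Y j))"
      using that unfolding C_def cbox_d_Int cbox_d_eq_empty by (meson not_less)
    then show ?thesis
      using proper \<open>0 < d\<close>
      by (simp add: C_def cbox_d_Int orth_facet_d_cbox_d_iff boxes_touch_def
          intervals_abut_iff_max_min intervals_overlap_iff_max_min)
  qed
  have touch_not_apart: "boxes_touch d X Y \<Longrightarrow> \<not> boxes_apart d X Y"
    using proper boxes_touch_not_apart by (auto simp: boxes_apart_def)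
  have touch_interiors: "boxes_touch d X Y \<Longrightarrow> U = {}"
    using proper \<open>0 < d\<close>
    by (auto simp: U_def obox_d_Int obox_d_eq_empty boxes_touch_def intervals_abut_iff_max_min)
  have apart_interiors: "boxes_apart d X Y \<Longrightarrow> U = {}"
    by (auto simp: U_def obox_d_Int obox_d_eq_empty boxes_apart_def intervals_apart_def)
  show ?thesis
    using C_eq_empty facet touch_not_apart touch_interiors apart_interiors by auto
qed

lemma CBU_iff_contact_representation:
  assumes "0 < d"
  shows "CBU d V E \<longleftrightarrow> simple_graph V E \<and> (\<exists>box. contact_representation d V E box)"
proof -
  define Q where "Q X Y e \<longleftrightarrow>
      obox_d d (\<lambda>j. fst (X j)) (\<lambda>j. snd (X j)) \<inter> obox_d d (\<lambda>j. fst (Y j)) (\<lambda>j. snd (Y j)) = {} \<and>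
      (e \<longleftrightarrow> cbox_d d (\<lambda>j. fst (X j)) (\<lambda>j. snd (X j)) \<inter> cbox_d d (\<lambda>j. fst (Y j)) (\<lambda>j. snd (Y j)) \<noteq> {}) \<and>
      (cbox_d d (\<lambda>j. fst (X j)) (\<lambda>j. snd (X j)) \<inter> cbox_d d (\<lambda>j. fst (Y j)) (\<lambda>j. snd (Y j)) \<noteq> {} \<longrightarrow>
         orth_facet_d d (cbox_d d (\<lambda>j. fst (X j)) (\<lambda>j. snd (X j)) \<inter> cbox_d d (\<lambda>j. fst (Y j)) (\<lambda>j. snd (Y j))))"
    for X Y :: "nat \<Rightarrow> real \<times> real" and e
  define P where "P box \<longleftrightarrow> (\<forall>v\<in>V. \<forall>j<d. proper_interval (box v j)) \<and>
      (\<forall>u\<in>V. \<forall>v\<in>V. u \<noteq> v \<longrightarrow> Q (box u) (box v) (E u v))" for box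
  have P_iff: "P box \<longleftrightarrow> contact_representation d V E box" for box
    unfolding P_def contact_representation_def
  proof (intro conj_cong refl ball_cong imp_cong)
    fix u v assume "\<forall>v\<in>V. \<forall>j<d. proper_interval (box v j)" "u \<in> V" "v \<in> V"
    then show "Q (box u) (box v) (E u v) \<longleftrightarrow>
        (if E u v then boxes_touch d (box u) (box v) else boxes_apart d (box u) (box v))"
      unfolding Q_def by (intro CBU_pair_condition_iff[OF \<open>0 < d\<close>]) auto
  qed
  have "CBU d V E \<longleftrightarrow> simple_graph V E \<and> (\<exists>a b. P (\<lambda>v j. (a v j, b v j)))"
    unfolding CBU_def P_def Q_def proper_interval_def fst_conv snd_conv
    by (simp only: imp_conjR ball_conj_distrib conj_assoc)
  also have "(\<exists>a b. P (\<lambda>v j. (a v j, b v j))) \<longleftrightarrow> (\<exists>box. P box)"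
  proof
    assume "\<exists>box. P box"
    then obtain box where "P box" ..
    then have "P (\<lambda>v j. (fst (box v j), snd (box v j)))"
      by simp
    then show "\<exists>a b. P (\<lambda>v j. (a v j, b v j))"
      by - (rule exI, rule exI, assumption)
  qed blast
  also have "\<dots> \<longleftrightarrow> (\<exists>box. contact_representation d V E box)"
    using P_iff by blast
  finally show ?thesis .
qed

lemma contact_representation_Suc:
  assumes "0 < d" and rep: "contact_representation d V E box"
  shows "contact_representation (Suc d) V E (\<lambda>v. (box v)(d := (0, 1)))"
proof -
  have "boxes_touch (Suc d) ((box u)(d := (0, 1))) ((box v)(d := (0, 1)))"
    if "boxes_touch d (box u) (box v)" for u v
    using that \<open>0 < d\<close> by (auto simp: boxes_touch_def intervals_overlap_def less_Suc_eq)
  moreover have "boxes_apart (Suc d) ((box u)(d := (0, 1))) ((box v)(d := (0, 1)))"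
    if "boxes_apart d (box u) (box v)" for u v
    using that by (auto simp: boxes_apart_def)
  ultimately show ?thesis
    using rep by (auto simp: contact_representation_def proper_interval_def less_Suc_eq)
qed

lemma CBU_Suc: "0 < d \<Longrightarrow> CBU d V E \<Longrightarrow> CBU (Suc d) V E"
  using contact_representation_Suc by (meson CBU_iff_contact_representation zero_less_Suc)

text \<open>Vertices i < n form the left side and k + n the right side; i + n is the partner of i.\<close>

definition crown_adj :: "nat \<Rightarrow> nat \<Rightarrow> nat \<Rightarrow> bool" where
  "crown_adj n u v \<longleftrightarrow>
     (u < n \<and> n \<le> v \<and> v < 2 * n \<and> v \<noteq> u + n) \<or> (v < n \<and> n \<le> u \<and> u < 2 * n \<and> u \<noteq> v + n)"

lemma simple_graph_crown: "simple_graph {..<2 * n} (crown_adj n)"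
  unfolding simple_graph_def crown_adj_def by auto

lemma contact_representation_crown_le:
  assumes rep: "contact_representation d {..<2 * n} (crown_adj n) box"
  shows "n \<le> 2 * d"
proof -
  have proper: "\<And>v j. v < 2 * n \<Longrightarrow> j < d \<Longrightarrow> proper_interval (box v j)"
    using rep by (auto simp: contact_representation_def)
  have "\<exists>j<d. intervals_apart (box i j) (box (i + n) j)" if "i < n" for i
    using contact_representation_nonadjacent[OF rep, of i "i + n"] that
    by (auto simp: crown_adj_def boxes_apart_def)
  then obtain g where g: "\<And>i. i < n \<Longrightarrow> g i < d \<and> intervals_apart (box i (g i)) (box (i + n) (g i))"
    by metis
  have not_apart: "\<not> intervals_apart (box i (g k)) (box (k + n) (g k))" if "i < n" "k < n" "i \<noteq> k" for i k
  proof -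
    have "boxes_touch d (box i) (box (k + n))"
      using contact_representation_adjacent[OF rep, of i "k + n"] that by (auto simp: crown_adj_def)
    then show ?thesis
      using that g[of k] proper by (intro boxes_touch_not_apart) auto
  qed
  define f where "f i = (g i, snd (box i (g i)) < fst (box (i + n) (g i)))" for i
  have "inj_on f {..<n}"
  proof (rule inj_onI, rule ccontr)
    fix i k assume "i \<in> {..<n}" "k \<in> {..<n}" "f i = f k" "i \<noteq> k"
    then show False
      using g[of i] g[of k] not_apart[of i k] not_apart[of k i]
      by (auto simp: f_def intervals_apart_def)
  qed
  moreover have "f ` {..<n} \<subseteq> {..<d} \<times> UNIV"
    using g by (auto simp: f_def)
  ultimately have "card {..<n} \<le> card ({..<d} \<times> (UNIV :: bool set))"
    by (intro card_inj_on_le) auto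
  then show ?thesis
    by (simp add: card_cartesian_product)
qed

text \<open>The coordinate p + 1, which separates the pair {2p, 2p + 1}, carries two families of
  intervals inside full_interval d:
  short intervals, pairwise apart, in the order given by the reflection i \<mapsto> 2p - i modulo 2d,
  which puts index 2p first and 2p + 1 last; and long intervals, which overlap every short
  interval except that the long interval of 2p misses the first and that of 2p + 1 the last one.\<close>

definition slot :: "nat \<Rightarrow> nat \<Rightarrow> nat \<Rightarrow> nat" where
  "slot d p i = (if i \<le> 2 * p then 2 * p - i else 2 * p + 2 * d - i)"

definition short_interval :: "nat \<Rightarrow> nat \<Rightarrow> nat \<Rightarrow> real \<times> real" where
  "short_interval d p i = (2 * real (slot d p i), 2 * real (slot d p i) + 1)"

definition long_interval :: "nat \<Rightarrow> nat \<Rightarrow> nat \<Rightarrow> real \<times> real" where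
  "long_interval d p k =
     (if k = 2 * p then 2 else 0, if k = 2 * p + 1 then 4 * real d - 3 else 4 * real d - 1)"

definition full_interval :: "nat \<Rightarrow> real \<times> real" where
  "full_interval d = (0, 4 * real d - 1)"

lemma slot_less: "p < d \<Longrightarrow> i < 2 * d \<Longrightarrow> slot d p i < 2 * d"
  by (auto simp: slot_def)

lemma slot_eq_0_iff: "i < 2 * d \<Longrightarrow> slot d p i = 0 \<longleftrightarrow> i = 2 * p"
  by (auto simp: slot_def)

lemma slot_eq_last_iff: "p < d \<Longrightarrow> i < 2 * d \<Longrightarrow> slot d p i = 2 * d - 1 \<longleftrightarrow> i = 2 * p + 1"
  by (auto simp: slot_def)

lemma slot_inject: "p < d \<Longrightarrow> i < 2 * d \<Longrightarrow> k < 2 * d \<Longrightarrow> slot d p i = slot d p k \<longleftrightarrow> i = k"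
  by (auto simp: slot_def split: if_splits)

lemma short_intervals_apart:
  assumes "p < d" "i < 2 * d" "k < 2 * d" "i \<noteq> k"
  shows "intervals_apart (short_interval d p i) (short_interval d p k)"
proof -
  have "slot d p i \<noteq> slot d p k"
    using assms slot_inject by blast
  then show ?thesis
    by (auto simp: intervals_apart_def short_interval_def)
qed

lemma short_long_intervals_overlap:
  assumes "p < d" "i < 2 * d" "k < 2 * d" "i \<noteq> k \<or> i div 2 \<noteq> p"
  shows "intervals_overlap (short_interval d p i) (long_interval d p k)"
proof -
  have "real (slot d p i) + 1 \<le> 2 * real d - 1" if "k = 2 * p + 1"
    using assms that slot_less[of p d i] slot_eq_last_iff[of p d i] by linarith
  moreover have "1 \<le> real (slot d p i)" if "k = 2 * p"
    using assms that slot_eq_0_iff[of i d p] by linarith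
  moreover have "real (slot d p i) + 1 \<le> 2 * real d"
    using slot_less[of p d i] assms by linarith
  ultimately show ?thesis
    by (auto simp: intervals_overlap_def short_interval_def long_interval_def)
qed

lemma short_long_intervals_apart:
  assumes "p < d" "i < 2 * d" "i div 2 = p"
  shows "intervals_apart (short_interval d p i) (long_interval d p i)"
proof -
  consider "i = 2 * p" | "i = 2 * p + 1"
    using assms(3) by linarith
  then show ?thesis
  proof cases
    case 1
    then show ?thesis
      using slot_eq_0_iff[of i d p] assms
      by (simp add: intervals_apart_def short_interval_def long_interval_def)
  next
    case 2
    then have "slot d p i = 2 * d - 1" "1 \<le> d"
      using slot_eq_last_iff[of p d i] assms by auto
    then show ?thesis
      using 2 by (simp add: intervals_apart_def short_interval_def long_interval_def of_nat_diff)
  qed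
qed

lemma
  assumes "p < d" "i < 2 * d"
  shows proper_short_interval: "proper_interval (short_interval d p i)"
    and full_short_intervals_overlap: "intervals_overlap (full_interval d) (short_interval d p i)"
  using slot_less[OF assms]
  by (auto simp: proper_interval_def intervals_overlap_def short_interval_def full_interval_def)

lemma
  assumes "1 \<le> d"
  shows proper_long_interval: "proper_interval (long_interval d p k)"
    and full_long_intervals_overlap: "intervals_overlap (full_interval d) (long_interval d p k)"
    and proper_full_interval: "proper_interval (full_interval d)"
  using assms
  by (auto simp: proper_interval_def intervals_overlap_def long_interval_def full_interval_def)

text \<open>In coordinate 0
  the left boxes lie in [0, 1] and the right boxes in [1, 2], except for the index 2d, whose boxes
  are moved to [2, 3] and [-1, 0] and fill all other coordinates. In coordinate 1 the left boxes
  are short and the right ones long, in the coordinates p + 1 \<ge> 2 the other way round; for d = 1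
  the two long right intervals of coordinate 1 are apart, as no short interval lies between them.\<close>

definition crown_left_box :: "nat \<Rightarrow> nat \<Rightarrow> nat \<Rightarrow> real \<times> real" where
  "crown_left_box d i j =
     (if j = 0 then (if i = 2 * d then (2, 3) else (0, 1))
      else if i = 2 * d then full_interval d
      else if j = 1 then short_interval d 0 i
      else long_interval d (j - 1) i)"

definition crown_right_box :: "nat \<Rightarrow> nat \<Rightarrow> nat \<Rightarrow> real \<times> real" where
  "crown_right_box d k j =
     (if j = 0 then (if k = 2 * d then (-1, 0) else (1, 2))
      else if k = 2 * d then full_interval d
      else if j = 1 then long_interval d 0 k
      else short_interval d (j - 1) k)"

definition crown_box :: "nat \<Rightarrow> nat \<Rightarrow> nat \<Rightarrow> real \<times> real" where
  "crown_box d v = (if v < 2 * d + 1 then crown_left_box d v else crown_right_box d (v - (2 * d + 1)))"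

lemma
  assumes "1 \<le> d" "i \<le> 2 * d" "j < Suc d"
  shows proper_crown_left_box: "proper_interval (crown_left_box d i j)"
    and proper_crown_right_box: "proper_interval (crown_right_box d i j)"
  using assms proper_short_interval[of "j - 1" d i] proper_long_interval proper_full_interval
  by (auto simp: crown_left_box_def crown_right_box_def proper_interval_def)

lemma crown_left_right_boxes_touch:
  assumes "1 \<le> d" "i \<le> 2 * d" "k \<le> 2 * d" "i \<noteq> k"
  shows "boxes_touch (Suc d) (crown_left_box d i) (crown_right_box d k)"
proof -
  have "intervals_overlap (crown_left_box d i j) (crown_right_box d k j)" if j: "j \<in> {1..<Suc d}" for j
  proof -
    have "j \<noteq> 0" "j - 1 < d"
      using j by auto
    consider "i = 2 * d" | "k = 2 * d" | "i < 2 * d" "k < 2 * d" "j = 1" | "i < 2 * d" "k < 2 * d" "j \<noteq> 1"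
      using assms by linarith
    then show ?thesis
    proof cases
      case 1
      then show ?thesis
        using assms \<open>j \<noteq> 0\<close> \<open>j - 1 < d\<close> full_short_intervals_overlap[of "j - 1" d k] full_long_intervals_overlap
        by (simp add: crown_left_box_def crown_right_box_def)
    next
      case 2
      then show ?thesis
        using assms \<open>j \<noteq> 0\<close> full_short_intervals_overlap[of 0 d i] full_long_intervals_overlap
        by (simp add: crown_left_box_def crown_right_box_def intervals_overlap_commute)
    next
      case 3
      then show ?thesis
        using assms short_long_intervals_overlap[of 0 d i k]
        by (simp add: crown_left_box_def crown_right_box_def)
    next
      case 4
      then show ?thesis
        using assms \<open>j \<noteq> 0\<close> \<open>j - 1 < d\<close> short_long_intervals_overlap[of "j - 1" d k i]
        by (simp add: crown_left_box_def crown_right_box_def intervals_overlap_commute)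
    qed
  qed
  moreover have "intervals_abut (crown_left_box d i 0) (crown_right_box d k 0)"
    using assms by (auto simp: crown_left_box_def crown_right_box_def intervals_abut_def)
  ultimately show ?thesis
    by (simp add: boxes_touch_def)
qed

lemma crown_left_right_boxes_apart:
  assumes "i \<le> 2 * d"
  shows "boxes_apart (Suc d) (crown_left_box d i) (crown_right_box d i)"
proof (cases "i = 2 * d")
  case True
  then have "intervals_apart (crown_left_box d i 0) (crown_right_box d i 0)"
    by (simp add: crown_left_box_def crown_right_box_def intervals_apart_def)
  then show ?thesis
    unfolding boxes_apart_def by blast
next
  case False
  define p where "p = i div 2"
  have "i < 2 * d" "p < d"
    using assms False by (auto simp: p_def)
  have "crown_left_box d i (Suc p) = (if p = 0 then short_interval d p i else long_interval d p i)"
    "crown_right_box d i (Suc p) = (if p = 0 then long_interval d p i else short_interval d p i)"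
    using \<open>i < 2 * d\<close> by (simp_all add: crown_left_box_def crown_right_box_def)
  moreover have "intervals_apart (short_interval d p i) (long_interval d p i)"
    using short_long_intervals_apart \<open>i < 2 * d\<close> \<open>p < d\<close> p_def by blast
  moreover then have "intervals_apart (long_interval d p i) (short_interval d p i)"
    using intervals_apart_commute by blast
  ultimately have "intervals_apart (crown_left_box d i (Suc p)) (crown_right_box d i (Suc p))"
    by (cases "p = 0") simp_all
  then show ?thesis
    unfolding boxes_apart_def using \<open>p < d\<close> by blast
qed

lemma crown_left_boxes_apart:
  assumes "i \<le> 2 * d" "k \<le> 2 * d" "i \<noteq> k"
  shows "boxes_apart (Suc d) (crown_left_box d i) (crown_left_box d k)"
proof (cases "i = 2 * d \<or> k = 2 * d")
  case True
  then have "intervals_apart (crown_left_box d i 0) (crown_left_box d k 0)"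
    using assms by (auto simp: crown_left_box_def intervals_apart_def)
  then show ?thesis
    unfolding boxes_apart_def by blast
next
  case False
  then have "intervals_apart (crown_left_box d i 1) (crown_left_box d k 1)"
    using assms short_intervals_apart[of 0 d i k] by (simp add: crown_left_box_def)
  then show ?thesis
    unfolding boxes_apart_def using False assms by (intro exI[of _ 1]) auto
qed

lemma crown_right_boxes_apart:
  assumes "i \<le> 2 * d" "k \<le> 2 * d" "i \<noteq> k"
  shows "boxes_apart (Suc d) (crown_right_box d i) (crown_right_box d k)"
proof -
  consider "i = 2 * d \<or> k = 2 * d" | "d = 1" "i < 2" "k < 2" | "2 \<le> d" "i < 2 * d" "k < 2 * d"
    using assms by linarith
  then show ?thesis
  proof cases
    case 1
    then have "intervals_apart (crown_right_box d i 0) (crown_right_box d k 0)"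
      using assms by (auto simp: crown_right_box_def intervals_apart_def)
    then show ?thesis
      unfolding boxes_apart_def by blast
  next
    case 2
    then have "intervals_apart (crown_right_box d i 1) (crown_right_box d k 1)"
      using assms by (auto simp: crown_right_box_def long_interval_def intervals_apart_def)
    then show ?thesis
      unfolding boxes_apart_def using 2 by auto
  next
    case 3
    then have "intervals_apart (crown_right_box d i 2) (crown_right_box d k 2)"
      using assms short_intervals_apart[of 1 d i k] by (simp add: crown_right_box_def)
    then show ?thesis
      unfolding boxes_apart_def using 3 by (intro exI[of _ 2]) auto
  qed
qed

lemma contact_representation_crown:
  assumes "1 \<le> d"
  defines "n \<equiv> 2 * d + 1"
  shows "contact_representation (Suc d) {..<2 * n} (crown_adj n) (crown_box d)"
  unfolding contact_representation_def
proof (intro conjI ballI allI impI)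
  fix v j assume "v \<in> {..<2 * n}" "j < Suc d"
  then show "proper_interval (crown_box d v j)"
    using assms proper_crown_left_box proper_crown_right_box by (simp add: crown_box_def)
next
  fix u v assume "u \<in> {..<2 * n}" "v \<in> {..<2 * n}" "u \<noteq> v"
  then have u: "u < 2 * n" and v: "v < 2 * n" and "u \<noteq> v"
    by auto
  have left: "crown_box d w = crown_left_box d w" if "w < n" for w
    using that by (simp add: crown_box_def n_def)
  have right: "crown_box d w = crown_right_box d (w - n)" if "n \<le> w" for w
    using that by (simp add: crown_box_def n_def)
  consider "u < n" "v < n" | "u < n" "n \<le> v" | "n \<le> u" "v < n" | "n \<le> u" "n \<le> v"
    by linarith
  then show "if crown_adj n u v then boxes_touch (Suc d) (crown_box d u) (crown_box d v)
      else boxes_apart (Suc d) (crown_box d u) (crown_box d v)"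
  proof cases
    case 1
    then have "u \<le> 2 * d" "v \<le> 2 * d" "\<not> crown_adj n u v"
      by (auto simp: crown_adj_def n_def)
    then show ?thesis
      using crown_left_boxes_apart[of u d v] \<open>u \<noteq> v\<close> 1 left by simp
  next
    case 2
    then have "v - n \<le> 2 * d" "crown_adj n u v \<longleftrightarrow> u \<noteq> v - n"
      using v by (auto simp: crown_adj_def n_def)
    moreover have "boxes_apart (Suc d) (crown_left_box d u) (crown_right_box d (v - n))" if "u = v - n"
      using crown_left_right_boxes_apart[of u d] that 2 by (simp add: n_def)
    ultimately show ?thesis
      using crown_left_right_boxes_touch[of d u "v - n"] assms 2 left right
      by (simp add: n_def)
  next
    case 3
    then have k: "u - n \<le> 2 * d" "crown_adj n u v \<longleftrightarrow> v \<noteq> u - n"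
      using u by (auto simp: crown_adj_def n_def)
    moreover have "boxes_apart (Suc d) (crown_right_box d (u - n)) (crown_left_box d v)" if "v = u - n"
      using crown_left_right_boxes_apart[of v d] that 3 boxes_apart_commute by (simp add: n_def)
    moreover have "boxes_touch (Suc d) (crown_right_box d (u - n)) (crown_left_box d v)" if "v \<noteq> u - n"
      using crown_left_right_boxes_touch[of d v "u - n"] that assms 3 k boxes_touch_commute
      by (simp add: n_def)
    ultimately show ?thesis
      using 3 k left right by simp
  next
    case 4
    then have "u - n \<le> 2 * d" "v - n \<le> 2 * d" "u - n \<noteq> v - n" "\<not> crown_adj n u v"
      using u v \<open>u \<noteq> v\<close> by (auto simp: crown_adj_def n_def)
    then show ?thesis
      using crown_right_boxes_apart[of "u - n" d "v - n"] 4 right by simp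
  qed
qed

theorem mainTheorem7:
  fixes d :: nat
  assumes "d \<ge> 1"
  shows "(\<forall>V E. CBU d V E \<longrightarrow> CBU (Suc d) V E) \<and>
         (\<exists>V E. CBU (Suc d) V E \<and> \<not> CBU d V E)"
proof
  show "\<forall>V E. CBU d V E \<longrightarrow> CBU (Suc d) V E"
    using CBU_Suc assms by simp
  let ?n = "2 * d + 1"
  have "CBU (Suc d) {..<2 * ?n} (crown_adj ?n)"
    using CBU_iff_contact_representation simple_graph_crown contact_representation_crown assms
    by blast
  moreover have "\<not> CBU d {..<2 * ?n} (crown_adj ?n)"
  proof
    assume "CBU d {..<2 * ?n} (crown_adj ?n)"
    then obtain box where "contact_representation d {..<2 * ?n} (crown_adj ?n) box"
      using CBU_iff_contact_representation assms by auto
    then show False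
      using contact_representation_crown_le by fastforce
  qed
  ultimately show "\<exists>V E. CBU (Suc d) V E \<and> \<not> CBU d V E"
    by blast
qed

end
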